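(* A countable (finite or infinite) graph is $\mathcal{C}$-$\mathrm{HI}$ if and only if it is a disjoint union of copies of a single complete graph.
   Context: Graphs are simple; subgraphs are induced. A homomorphism of graphs maps edges to edges; an automorphism is a bijective endomorphism whose inverse is a homomorphism. A graph $G$ is $\mathcal{C}$-$\mathrm{HI}$ if every homomorphism from a finite connected induced subgraph of $G$ into $G$ extends to an automorphism of $G$. *)

theory Defs
  imports Main "HOL-Library.Countable_Set" "HOL-Library.Equipollence"
begin

definition simple_graph :: "'a set \<Rightarrow> ('a \<Rightarrow> 'a \<Rightarrow> bool) \<Rightarrow> bool" where
  "simple_graph V E \<longleftrightarrow> (\<forall>x y. E x y \<longrightarrow> x \<in> V \<and> y \<in> V)
     \<and> (\<forall>x y. E x y \<longrightarrow> E y x) \<and> (\<forall>x. \<not> E x x)"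

definition graph_hom_on :: "'a set \<Rightarrow> 'a set \<Rightarrow> ('a \<Rightarrow> 'a \<Rightarrow> bool) \<Rightarrow> ('a \<Rightarrow> 'a) \<Rightarrow> bool" where
  "graph_hom_on S V E f \<longleftrightarrow> f ` S \<subseteq> V \<and> (\<forall>x\<in>S. \<forall>y\<in>S. E x y \<longrightarrow> E (f x) (f y))"

definition graph_aut :: "'a set \<Rightarrow> ('a \<Rightarrow> 'a \<Rightarrow> bool) \<Rightarrow> ('a \<Rightarrow> 'a) \<Rightarrow> bool" where
  "graph_aut V E g \<longleftrightarrow> bij_betw g V V \<and> graph_hom_on V V E g
     \<and> graph_hom_on V V E (inv_into V g)"

definition induced_connected :: "'a set \<Rightarrow> ('a \<Rightarrow> 'a \<Rightarrow> bool) \<Rightarrow> bool" where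
  "induced_connected S E \<longleftrightarrow> S \<noteq> {} \<and>
     (\<forall>x\<in>S. \<forall>y\<in>S. (\<lambda>u v. u \<in> S \<and> v \<in> S \<and> E u v)\<^sup>*\<^sup>* x y)"

definition C_HI :: "'a set \<Rightarrow> ('a \<Rightarrow> 'a \<Rightarrow> bool) \<Rightarrow> bool" where
  "C_HI V E \<longleftrightarrow> (\<forall>S f. S \<subseteq> V \<and> finite S \<and> induced_connected S E \<and> graph_hom_on S V E f
       \<longrightarrow> (\<exists>g. graph_aut V E g \<and> (\<forall>x\<in>S. g x = f x)))"

definition disjoint_union_of_complete :: "'a set \<Rightarrow> ('a \<Rightarrow> 'a \<Rightarrow> bool) \<Rightarrow> bool" where
  "disjoint_union_of_complete V E \<longleftrightarrow> (\<exists>P.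
     \<Union>P = V \<and> (\<forall>B\<in>P. B \<noteq> {}) \<and> (\<forall>B\<in>P. \<forall>B'\<in>P. B \<noteq> B' \<longrightarrow> B \<inter> B' = {})
     \<and> (\<forall>B\<in>P. \<forall>x\<in>B. \<forall>y\<in>B. x \<noteq> y \<longrightarrow> E x y)
     \<and> (\<forall>x y. E x y \<longrightarrow> (\<exists>B\<in>P. x \<in> B \<and> y \<in> B))
     \<and> (\<forall>B\<in>P. \<forall>B'\<in>P. B \<approx> B'))"

end

theory Submission
  imports Defs
begin

text \<open>
If \<open>(V, E)\<close> is \<open>\<C>\<close>-HI, adjacency is transitive on distinct vertices: for a path \<open>x - y - z\<close>
with \<open>x, z\<close> non-adjacent, the map fixing \<open>x, y\<close> and sending \<open>z\<close> to \<open>x\<close> is a homomorphism on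
a connected induced subgraph that has no injective extension. Hence "equal or adjacent" is an
equivalence relation whose classes, the closed neighbourhoods, are cliques; extending the maps
between single vertices shows that all of them are equipotent.
Conversely, a finite connected induced subgraph lies in one clique \<open>B\<close>, and a homomorphism on it
is injective with image in one clique \<open>B'\<close>. Extending it to a bijection \<open>B \<rightarrow> B'\<close> and swapping
\<open>B\<close> with \<open>B'\<close> gives a permutation of the cliques, hence an automorphism.
\<close>

lemma eqpoll_Diff_finite:
  assumes "finite S" "infinite A"
  shows "A - S \<approx> A"
  using assms
proof (induction S rule: finite_induct)
  case (insert a S)
  have "A - insert a S \<approx> A - S"
  proof (cases "a \<in> A")
    case True
    have "infinite (A - insert a S)"
      using insert by (simp add: Diff_infinite_finite)
    moreover have "A - S = insert a (A - insert a S)"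
      using True insert.hyps(2) by auto
    ultimately show ?thesis
      by (metis infinite_insert_eqpoll eqpoll_sym)
  next
    case False
    then have "A - insert a S = A - S" by auto
    then show ?thesis by simp
  qed
  then show ?case
    using insert by (blast intro: eqpoll_trans)
qed simp

lemma bij_betw_extend_inj_on:
  assumes "A \<approx> B" "finite S" "S \<subseteq> A" "inj_on f S" "f ` S \<subseteq> B"
  shows "\<exists>h. bij_betw h A B \<and> (\<forall>x\<in>S. h x = f x)"
proof -
  have "A - S \<approx> B - f ` S"
  proof (cases "finite A")
    case True
    then have "finite B" "card A = card B"
      using assms(1) eqpoll_finite_iff eqpoll_iff_card by blast+
    moreover have "card (f ` S) = card S"
      using assms(4) by (rule card_image)
    ultimately show ?thesis
      using True assms(2,3,5) by (simp add: eqpoll_iff_card card_Diff_subset)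
  next
    case False
    then have "infinite B"
      using assms(1) eqpoll_finite_iff by blast
    have "A - S \<approx> A"
      using assms(2) False by (rule eqpoll_Diff_finite)
    also have "A \<approx> B" by fact
    also have "B \<approx> B - f ` S"
      using \<open>infinite B\<close> assms(2) by (metis eqpoll_Diff_finite eqpoll_sym finite_imageI)
    finally show ?thesis .
  qed
  then obtain k where k: "bij_betw k (A - S) (B - f ` S)"
    unfolding eqpoll_def by blast
  define h where "h x = (if x \<in> S then f x else k x)" for x
  have "bij_betw h S (f ` S)"
    using assms(4) by (simp add: bij_betw_def h_def inj_on_def)
  moreover have "bij_betw h (A - S) (B - f ` S)"
    using k by (rule bij_betw_cong[THEN iffD1, rotated]) (simp add: h_def)
  ultimately have "bij_betw h (S \<union> (A - S)) (f ` S \<union> (B - f ` S))"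
    by (rule bij_betw_combine) blast
  moreover have "S \<union> (A - S) = A" "f ` S \<union> (B - f ` S) = B"
    using assms(3,5) by auto
  ultimately show ?thesis
    by (auto simp: h_def)
qed

lemma graph_autI:
  assumes bij: "bij_betw g V V" and adj: "\<forall>x\<in>V. \<forall>y\<in>V. E (g x) (g y) \<longleftrightarrow> E x y"
  shows "graph_aut V E g"
proof -
  have inv: "inv_into V g x \<in> V" "g (inv_into V g x) = x" if "x \<in> V" for x
    using bij that by (auto simp: bij_betw_def intro: inv_into_into f_inv_into_f)
  have "E (inv_into V g x) (inv_into V g y)" if "x \<in> V" "y \<in> V" "E x y" for x y
  proof -
    have "E (g (inv_into V g x)) (g (inv_into V g y))"
      using inv that by simp
    then show ?thesis
      using adj inv that(1,2) by blast
  qed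
  then have "graph_hom_on V V E (inv_into V g)"
    using inv by (auto simp: graph_hom_on_def)
  then show ?thesis
    using assms unfolding graph_aut_def graph_hom_on_def bij_betw_def by auto
qed

lemma graph_aut_adjacent_iff:
  assumes "graph_aut V E g" "x \<in> V" "y \<in> V"
  shows "E (g x) (g y) \<longleftrightarrow> E x y"
proof -
  have bij: "bij_betw g V V" and hom: "graph_hom_on V V E g"
    and hom_inv: "graph_hom_on V V E (inv_into V g)"
    using assms(1) by (simp_all add: graph_aut_def)
  have "g x \<in> V" "g y \<in> V"
    using bij assms(2,3) by (simp_all add: bij_betw_apply)
  show ?thesis
  proof
    assume "E (g x) (g y)"
    then have "E (inv_into V g (g x)) (inv_into V g (g y))"
      using hom_inv \<open>g x \<in> V\<close> \<open>g y \<in> V\<close> by (simp add: graph_hom_on_def)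
    then show "E x y"
      using bij assms(2,3) by (simp add: bij_betw_inv_into_left)
  qed (use hom assms(2,3) in \<open>simp add: graph_hom_on_def\<close>)
qed

definition clique_partition :: "'a set \<Rightarrow> ('a \<Rightarrow> 'a \<Rightarrow> bool) \<Rightarrow> 'a set set \<Rightarrow> bool" where
  "clique_partition V E P \<longleftrightarrow> \<Union>P = V \<and> pairwise disjnt P
     \<and> (\<forall>x y. E x y \<longleftrightarrow> x \<noteq> y \<and> (\<exists>B\<in>P. x \<in> B \<and> y \<in> B))"

lemma disjoint_union_of_complete_iff:
  assumes "simple_graph V E"
  shows "disjoint_union_of_complete V E \<longleftrightarrow>
    (\<exists>P. clique_partition V E P \<and> {} \<notin> P \<and> (\<forall>B\<in>P. \<forall>B'\<in>P. B \<approx> B'))"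
proof -
  have irrefl: "\<not> E x x" for x
    using assms by (simp add: simple_graph_def)
  have adj: "(\<forall>B\<in>P. \<forall>x\<in>B. \<forall>y\<in>B. x \<noteq> y \<longrightarrow> E x y) \<and> (\<forall>x y. E x y \<longrightarrow> (\<exists>B\<in>P. x \<in> B \<and> y \<in> B))
    \<longleftrightarrow> (\<forall>x y. E x y \<longleftrightarrow> x \<noteq> y \<and> (\<exists>B\<in>P. x \<in> B \<and> y \<in> B))" for P
  proof
    assume "(\<forall>B\<in>P. \<forall>x\<in>B. \<forall>y\<in>B. x \<noteq> y \<longrightarrow> E x y) \<and> (\<forall>x y. E x y \<longrightarrow> (\<exists>B\<in>P. x \<in> B \<and> y \<in> B))"
    then show "\<forall>x y. E x y \<longleftrightarrow> x \<noteq> y \<and> (\<exists>B\<in>P. x \<in> B \<and> y \<in> B)"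
      using irrefl by metis
  qed (use irrefl in metis)
  have "(\<forall>B\<in>P. \<forall>B'\<in>P. B \<noteq> B' \<longrightarrow> B \<inter> B' = {}) \<longleftrightarrow> pairwise disjnt P" for P :: "'a set set"
    by (simp add: pairwise_def disjnt_def)
  then show ?thesis
    unfolding disjoint_union_of_complete_def clique_partition_def adj[symmetric]
    by (intro ex_cong1) auto
qed

lemma clique_partition_adjacent_iff:
  "clique_partition V E P \<Longrightarrow> E x y \<longleftrightarrow> x \<noteq> y \<and> (\<exists>B\<in>P. x \<in> B \<and> y \<in> B)"
  by (simp add: clique_partition_def)

lemma clique_partition_block_unique:
  assumes "clique_partition V E P" "B \<in> P" "C \<in> P" "x \<in> B" "x \<in> C"
  shows "B = C"
proof -
  have "pairwise disjnt P"
    using assms(1) by (simp add: clique_partition_def)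
  then show ?thesis
    using assms(2-5) by (metis disjnt_iff pairwiseD)
qed

lemma clique_partition_adjacent_in_block:
  assumes cp: "clique_partition V E P" and "E x y" "B \<in> P" "x \<in> B"
  shows "y \<in> B"
proof -
  obtain C where "C \<in> P" "x \<in> C" "y \<in> C"
    using clique_partition_adjacent_iff[OF cp] \<open>E x y\<close> by blast
  then show ?thesis
    using clique_partition_block_unique[OF cp \<open>B \<in> P\<close>] \<open>x \<in> B\<close> by blast
qed

lemma clique_partition_connected_subset_block:
  assumes cp: "clique_partition V E P" and conn: "induced_connected S E"
    and "s \<in> S" "B \<in> P" "s \<in> B"
  shows "S \<subseteq> B"
proof
  fix u assume "u \<in> S"
  then have "(\<lambda>u v. u \<in> S \<and> v \<in> S \<and> E u v)\<^sup>*\<^sup>* s u"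
    using conn \<open>s \<in> S\<close> by (simp add: induced_connected_def)
  then show "u \<in> B"
    by (induction rule: rtranclp_induct)
      (use \<open>s \<in> B\<close> clique_partition_adjacent_in_block[OF cp _ \<open>B \<in> P\<close>] in auto)
qed

lemma clique_partition_graph_autI:
  assumes cp: "clique_partition V E P" and bij: "bij_betw g V V" and blocks: "\<forall>C\<in>P. g ` C \<in> P"
  shows "graph_aut V E g"
proof (rule graph_autI[OF bij], intro ballI)
  fix x y assume "x \<in> V" "y \<in> V"
  have inj: "inj_on g V"
    using bij by (rule bij_betw_imp_inj_on)
  have "(\<exists>D\<in>P. g x \<in> D \<and> g y \<in> D) \<longleftrightarrow> (\<exists>C\<in>P. x \<in> C \<and> y \<in> C)"
  proof
    assume "\<exists>D\<in>P. g x \<in> D \<and> g y \<in> D"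
    then obtain D where D: "D \<in> P" "g x \<in> D" "g y \<in> D" by blast
    obtain C where C: "C \<in> P" "x \<in> C"
      using cp \<open>x \<in> V\<close> by (auto simp: clique_partition_def)
    have "g ` C = D"
      using clique_partition_block_unique[OF cp] blocks C D by blast
    then obtain z where "z \<in> C" "g y = g z"
      using D(3) by auto
    moreover have "C \<subseteq> V"
      using cp C(1) by (auto simp: clique_partition_def)
    ultimately have "y = z"
      using inj \<open>y \<in> V\<close> by (auto dest: inj_onD)
    then show "\<exists>C\<in>P. x \<in> C \<and> y \<in> C"
      using C \<open>z \<in> C\<close> by blast
  qed (use blocks in blast)
  moreover have "g x = g y \<longleftrightarrow> x = y"
    using inj \<open>x \<in> V\<close> \<open>y \<in> V\<close> by (auto dest: inj_onD)
  ultimately show "E (g x) (g y) \<longleftrightarrow> E x y"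
    by (simp add: clique_partition_adjacent_iff[OF cp])
qed

definition closed_nbhd :: "('a \<Rightarrow> 'a \<Rightarrow> bool) \<Rightarrow> 'a \<Rightarrow> 'a set" where
  "closed_nbhd E x = insert x {y. E x y}"

lemma closed_nbhd_subset:
  "simple_graph V E \<Longrightarrow> x \<in> V \<Longrightarrow> closed_nbhd E x \<subseteq> V"
  by (auto simp: closed_nbhd_def simple_graph_def)

lemma graph_aut_image_closed_nbhd:
  assumes sg: "simple_graph V E" and aut: "graph_aut V E g" and "x \<in> V"
  shows "g ` closed_nbhd E x = closed_nbhd E (g x)"
proof
  show "g ` closed_nbhd E x \<subseteq> closed_nbhd E (g x)"
    using graph_aut_adjacent_iff[OF aut \<open>x \<in> V\<close>] closed_nbhd_subset[OF sg \<open>x \<in> V\<close>]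
    by (auto simp: closed_nbhd_def)
next
  have bij: "bij_betw g V V"
    using aut by (simp add: graph_aut_def)
  show "closed_nbhd E (g x) \<subseteq> g ` closed_nbhd E x"
  proof
    fix z assume z: "z \<in> closed_nbhd E (g x)"
    have "g x \<in> V"
      using bij \<open>x \<in> V\<close> by (rule bij_betw_apply)
    then have "z \<in> g ` V"
      using z closed_nbhd_subset[OF sg] bij by (auto simp: bij_betw_def)
    then obtain y where y: "y \<in> V" "z = g y" by blast
    have "y = x \<or> E x y"
    proof (cases "g y = g x")
      case True
      then show ?thesis
        using bij_betw_imp_inj_on[OF bij] y(1) \<open>x \<in> V\<close> by (auto dest: inj_onD)
    next
      case False
      then show ?thesis
        using z y graph_aut_adjacent_iff[OF aut \<open>x \<in> V\<close> y(1)] by (simp add: closed_nbhd_def)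
    qed
    then show "z \<in> g ` closed_nbhd E x"
      using y by (auto simp: closed_nbhd_def)
  qed
qed

lemma disjoint_union_of_completeI:
  assumes sg: "simple_graph V E"
    and adj_trans: "\<And>x y z. E x y \<Longrightarrow> E y z \<Longrightarrow> x \<noteq> z \<Longrightarrow> E x z"
    and eqpoll: "\<And>x y. x \<in> V \<Longrightarrow> y \<in> V \<Longrightarrow> closed_nbhd E x \<approx> closed_nbhd E y"
  shows "disjoint_union_of_complete V E"
proof -
  have sym: "E x y \<Longrightarrow> E y x" and irrefl: "\<not> E x x" for x y
    using sg by (auto simp: simple_graph_def)
  define r where "r = {(x, y). x \<in> V \<and> y \<in> closed_nbhd E x}"
  have equiv_class: "r `` {x} = closed_nbhd E x" if "x \<in> V" for x
    using that by (auto simp: r_def)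
  have "refl_on V r"
    using closed_nbhd_subset[OF sg] by (auto simp: refl_on_def r_def closed_nbhd_def)
  moreover have "sym r"
    using closed_nbhd_subset[OF sg] sym by (auto simp: sym_def r_def closed_nbhd_def)
  moreover have "trans r"
    using adj_trans by (auto simp: trans_def r_def closed_nbhd_def)
  moreover have "r \<subseteq> V \<times> V"
    using closed_nbhd_subset[OF sg] by (auto simp: r_def)
  ultimately have eqv: "equiv V r"
    by (simp add: equivI)
  have "E x y \<longleftrightarrow> x \<noteq> y \<and> (\<exists>B\<in>V // r. x \<in> B \<and> y \<in> B)" for x y
  proof
    assume "E x y"
    then have "x \<in> V"
      using sg by (simp add: simple_graph_def)
    then have "r `` {x} \<in> V // r" "x \<in> r `` {x}" "y \<in> r `` {x}"
      using \<open>E x y\<close> by (simp_all only: quotientI) (simp_all add: equiv_class closed_nbhd_def)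
    then show "x \<noteq> y \<and> (\<exists>B\<in>V // r. x \<in> B \<and> y \<in> B)"
      using irrefl \<open>E x y\<close> by blast
  next
    assume "x \<noteq> y \<and> (\<exists>B\<in>V // r. x \<in> B \<and> y \<in> B)"
    then obtain z where "x \<noteq> y" "z \<in> V" "x \<in> r `` {z}" "y \<in> r `` {z}"
      by (auto elim!: quotientE)
    then have "y \<in> r `` {x}"
      using eqv equiv_class_eq by (metis Image_singleton_iff)
    then show "E x y"
      using \<open>x \<noteq> y\<close> by (simp add: r_def closed_nbhd_def)
  qed
  moreover have "pairwise disjnt (V // r)"
    unfolding pairwise_def disjnt_def using quotient_disj[OF eqv] by blast
  ultimately have "clique_partition V E (V // r)"
    using Union_quotient[OF eqv] by (simp add: clique_partition_def)
  moreover have "{} \<notin> V // r"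
    using eqv in_quotient_imp_non_empty by blast
  moreover have "\<forall>B\<in>V // r. \<forall>B'\<in>V // r. B \<approx> B'"
    using equiv_class eqpoll by (auto elim!: quotientE)
  ultimately show ?thesis
    using disjoint_union_of_complete_iff[OF sg] by blast
qed

lemma C_HI_adjacent_trans:
  assumes sg: "simple_graph V E" and C: "C_HI V E"
    and xy: "E x y" and yz: "E y z" and "x \<noteq> z"
  shows "E x z"
proof (rule ccontr)
  assume "\<not> E x z"
  have V: "x \<in> V" "y \<in> V" "z \<in> V" and yx: "E y x" and zy: "E z y" and "y \<noteq> z"
    using sg xy yz unfolding simple_graph_def by blast+
  define S where "S = {x, y, z}"
  define f where "f u = (if u = z then x else u)" for u
  let ?R = "\<lambda>u v. u \<in> S \<and> v \<in> S \<and> E u v"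
  have "?R\<^sup>*\<^sup>* x y" "?R\<^sup>*\<^sup>* y x" "?R\<^sup>*\<^sup>* y z" "?R\<^sup>*\<^sup>* z y"
    using xy yx yz zy by (auto simp: S_def)
  then have "?R\<^sup>*\<^sup>* u v" if "u \<in> S" "v \<in> S" for u v
    using that by (auto simp: S_def intro: rtranclp_trans)
  then have "induced_connected S E"
    by (auto simp: induced_connected_def S_def)
  moreover have "graph_hom_on S V E f"
    using sg V xy yx \<open>\<not> E x z\<close> \<open>x \<noteq> z\<close> \<open>y \<noteq> z\<close>
    by (auto simp: graph_hom_on_def simple_graph_def S_def f_def)
  moreover have "S \<subseteq> V" "finite S"
    using V by (auto simp: S_def)
  ultimately obtain g where g: "graph_aut V E g" "\<forall>u\<in>S. g u = f u"
    using C unfolding C_HI_def by blast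
  then have "g x = g z"
    by (simp add: S_def f_def)
  moreover have "inj_on g V"
    using g(1) by (simp add: graph_aut_def bij_betw_def)
  ultimately show False
    using V \<open>x \<noteq> z\<close> by (meson inj_onD)
qed

lemma C_HI_closed_nbhd_eqpoll:
  assumes sg: "simple_graph V E" and C: "C_HI V E" and "x \<in> V" "y \<in> V"
  shows "closed_nbhd E x \<approx> closed_nbhd E y"
proof -
  have "induced_connected {x} E"
    by (simp add: induced_connected_def)
  moreover have "graph_hom_on {x} V E (\<lambda>_. y)"
    using sg \<open>y \<in> V\<close> by (auto simp: graph_hom_on_def simple_graph_def)
  moreover have "{x} \<subseteq> V" "finite {x}"
    using \<open>x \<in> V\<close> by auto
  ultimately obtain g where g: "graph_aut V E g" "g x = y"
    using C unfolding C_HI_def by (metis singletonI)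
  then have "closed_nbhd E y = g ` closed_nbhd E x"
    using graph_aut_image_closed_nbhd[OF sg g(1) \<open>x \<in> V\<close>] by simp
  also have "\<dots> \<approx> closed_nbhd E x"
    using g(1) closed_nbhd_subset[OF sg \<open>x \<in> V\<close>]
    by (intro inj_on_image_eqpoll_self) (auto simp: graph_aut_def bij_betw_def intro: inj_on_subset)
  finally show ?thesis
    by (rule eqpoll_sym)
qed

lemma C_HI_imp_disjoint_union_of_complete:
  assumes "simple_graph V E" "C_HI V E"
  shows "disjoint_union_of_complete V E"
  using disjoint_union_of_completeI[OF assms(1) C_HI_adjacent_trans[OF assms] C_HI_closed_nbhd_eqpoll[OF assms]] .

text \<open>If \<open>B = B'\<close>, the second branch never applies and this is just \<open>h\<close> on \<open>B\<close>.\<close>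

definition block_swap :: "'a set \<Rightarrow> 'a set \<Rightarrow> ('a \<Rightarrow> 'a) \<Rightarrow> 'a \<Rightarrow> 'a" where
  "block_swap B B' h x = (if x \<in> B then h x else if x \<in> B' then inv_into B h x else x)"

lemma bij_betw_block_swap:
  assumes h: "bij_betw h B B'" and "B \<subseteq> V" "B' \<subseteq> V" and "B = B' \<or> disjnt B B'"
  shows "bij_betw (block_swap B B' h) V V"
proof (rule bij_betw_byWitness)
  define h' where "h' x = (if x \<in> B' then inv_into B h x else if x \<in> B then h x else x)" for x
  have "h x \<in> B'" "inv_into B h (h x) = x" if "x \<in> B" for x
    using h that by (auto simp: bij_betw_def)
  moreover have "inv_into B h y \<in> B" "h (inv_into B h y) = y" if "y \<in> B'" for y
    using h that by (auto simp: bij_betw_def intro: inv_into_into f_inv_into_f)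
  ultimately show "\<forall>x\<in>V. h' (block_swap B B' h x) = x" "\<forall>x\<in>V. block_swap B B' h (h' x) = x"
    "block_swap B B' h ` V \<subseteq> V" "h' ` V \<subseteq> V"
    using assms(2-4) by (auto simp: block_swap_def h'_def disjnt_def) blast
qed

lemma block_swap_image_left:
  assumes "bij_betw h B B'"
  shows "block_swap B B' h ` B = B'"
  using assms by (simp add: block_swap_def bij_betw_def)

lemma block_swap_image_right:
  assumes "bij_betw h B B'" and "B = B' \<or> disjnt B B'"
  shows "block_swap B B' h ` B' = B"
proof (cases "B = B'")
  case False
  then have "block_swap B B' h ` B' = inv_into B h ` B'"
    using assms(2) by (auto simp: block_swap_def disjnt_def)
  then show ?thesis
    using bij_betw_inv_into[OF assms(1)] by (simp add: bij_betw_def)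
qed (use block_swap_image_left[OF assms(1)] in simp)

lemma block_swap_image_disjnt:
  "disjnt C B \<Longrightarrow> disjnt C B' \<Longrightarrow> block_swap B B' h ` C = C"
  by (auto simp: block_swap_def disjnt_def)

lemma clique_partition_graph_aut_block_swap:
  assumes cp: "clique_partition V E P" and "B \<in> P" "B' \<in> P" and h: "bij_betw h B B'"
  shows "graph_aut V E (block_swap B B' h)"
proof -
  have disj: "pairwise disjnt P"
    using cp by (simp add: clique_partition_def)
  then have "B = B' \<or> disjnt B B'"
    using assms(2,3) by (metis pairwiseD)
  moreover have "B \<subseteq> V" "B' \<subseteq> V"
    using cp assms(2,3) by (auto simp: clique_partition_def)
  ultimately have "bij_betw (block_swap B B' h) V V"
    using bij_betw_block_swap[OF h] by blast
  moreover have "block_swap B B' h ` C \<in> P" if "C \<in> P" for C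
  proof (cases "C = B \<or> C = B'")
    case True
    then show ?thesis
      using block_swap_image_left[OF h] block_swap_image_right[OF h]
        \<open>B = B' \<or> disjnt B B'\<close> assms(2,3) by auto
  next
    case False
    then have "disjnt C B" "disjnt C B'"
      using disj that assms(2,3) by (metis pairwiseD)+
    then show ?thesis
      using block_swap_image_disjnt that by metis
  qed
  ultimately show ?thesis
    using clique_partition_graph_autI[OF cp] by blast
qed

lemma clique_partition_hom_inj_on:
  assumes cp: "clique_partition V E P" and "B \<in> P" "S \<subseteq> B" and hom: "graph_hom_on S V E f"
  shows "inj_on f S"
proof (rule inj_onI, rule ccontr)
  fix u v assume "u \<in> S" "v \<in> S" "f u = f v" "u \<noteq> v"
  then have "E u v"
    using clique_partition_adjacent_iff[OF cp] assms(2,3) by blast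
  then have "E (f u) (f u)"
    using hom \<open>u \<in> S\<close> \<open>v \<in> S\<close> \<open>f u = f v\<close> by (auto simp: graph_hom_on_def)
  then show False
    using clique_partition_adjacent_iff[OF cp] by blast
qed

lemma clique_partition_hom_image_block:
  assumes cp: "clique_partition V E P" and "B \<in> P" "S \<subseteq> B" "s \<in> S"
    and hom: "graph_hom_on S V E f"
  obtains B' where "B' \<in> P" "f ` S \<subseteq> B'"
proof -
  have "f s \<in> \<Union>P"
    using cp hom \<open>s \<in> S\<close> by (auto simp: clique_partition_def graph_hom_on_def)
  then obtain B' where B': "B' \<in> P" "f s \<in> B'"
    by blast
  have "f u \<in> B'" if "u \<in> S" for u
  proof (cases "u = s")
    case False
    then have "E s u"
      using clique_partition_adjacent_iff[OF cp] assms(2-4) that by blast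
    then have "E (f s) (f u)"
      using hom \<open>s \<in> S\<close> that by (auto simp: graph_hom_on_def)
    then show ?thesis
      using clique_partition_adjacent_in_block[OF cp _ B'] by blast
  qed (use B'(2) in simp)
  then show ?thesis
    using that B'(1) by blast
qed

lemma disjoint_union_of_complete_imp_C_HI:
  assumes "simple_graph V E" "disjoint_union_of_complete V E"
  shows "C_HI V E"
  unfolding C_HI_def
proof (intro allI impI, elim conjE)
  obtain P where cp: "clique_partition V E P" and eqpoll: "\<forall>B\<in>P. \<forall>B'\<in>P. B \<approx> B'"
    using assms disjoint_union_of_complete_iff by blast
  fix S f
  assume "S \<subseteq> V" "finite S" and conn: "induced_connected S E" and hom: "graph_hom_on S V E f"
  obtain s where "s \<in> S"
    using conn by (auto simp: induced_connected_def)
  then obtain B where B: "B \<in> P" "s \<in> B"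
    using cp \<open>S \<subseteq> V\<close> by (auto simp: clique_partition_def)
  have "S \<subseteq> B"
    using clique_partition_connected_subset_block[OF cp conn \<open>s \<in> S\<close> B] .
  obtain B' where "B' \<in> P" "f ` S \<subseteq> B'"
    using clique_partition_hom_image_block[OF cp B(1) \<open>S \<subseteq> B\<close> \<open>s \<in> S\<close> hom] .
  moreover have "inj_on f S"
    using clique_partition_hom_inj_on[OF cp B(1) \<open>S \<subseteq> B\<close> hom] .
  ultimately obtain h where h: "bij_betw h B B'" "\<forall>x\<in>S. h x = f x"
    using bij_betw_extend_inj_on \<open>finite S\<close> \<open>S \<subseteq> B\<close> eqpoll B(1) by metis
  have "graph_aut V E (block_swap B B' h)"
    using clique_partition_graph_aut_block_swap[OF cp B(1) \<open>B' \<in> P\<close> h(1)] .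
  moreover have "\<forall>x\<in>S. block_swap B B' h x = f x"
    using h(2) \<open>S \<subseteq> B\<close> by (auto simp: block_swap_def)
  ultimately show "\<exists>g. graph_aut V E g \<and> (\<forall>x\<in>S. g x = f x)"
    by blast
qed

theorem proposition4p1:
  fixes V :: "'a set" and E :: "'a \<Rightarrow> 'a \<Rightarrow> bool"
  assumes "simple_graph V E" and "countable V"
  shows "C_HI V E \<longleftrightarrow> disjoint_union_of_complete V E"
  using C_HI_imp_disjoint_union_of_complete disjoint_union_of_complete_imp_C_HI assms(1) by blast

end
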